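(* Let $m$ be an even positive integer. The right cosets $\Gamma_0(2)^+\gamma$ for $\gamma\in M^m$ are pairwise distinct.
   Context: Matrices are elements of $GL_2^+(\mathbb{R})$ considered up to sign. $\Gamma_0(2)=\{\begin{bmatrix}a&b\\c&d\end{bmatrix}\in SL_2(\mathbb{Z}): c\equiv0\pmod 2\}$, $w_2=2^{-1/2}\begin{bmatrix}0&-1\\2&0\end{bmatrix}$, $\Gamma_0(2)^+$ is the group generated by $\Gamma_0(2)$ and $w_2$. With integers $x,z>0$, $y$: $M_1^m=\{\begin{bmatrix}x&y\\0&z\end{bmatrix}: xz=m,\ 0\leq y<z,\ \gcd(x,y,z)=1,\ x\text{ odd}\}$, $S_1^m=\{\begin{bmatrix}x&y\\0&z\end{bmatrix}: xz=m,\ 0\leq y<z,\ \gcd(x,y,z)=1,\ z\text{ odd}\}$, $S_2^m=\{2^{-1/2}\begin{bmatrix}x&y\\0&z\end{bmatrix}: xz=2m,\ 0\leq y<z,\ \gcd(x,y,z)=1,\ x,z\text{ even}\}$, $M^m=M_1^m\cup S_1^m\cup S_2^m$. *)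

theory Defs
  imports "HOL-Analysis.Analysis"
begin

type_synonym mat2 = "real^2^2"

definition mk2 :: "real \<Rightarrow> real \<Rightarrow> real \<Rightarrow> real \<Rightarrow> mat2" where
  "mk2 a b c d = vector [vector [a, b], vector [c, d]]"

definition Gamma0_2 :: "mat2 set" where
  "Gamma0_2 = {mk2 (of_int a) (of_int b) (of_int c) (of_int d) | a b c d :: int.
                 a * d - b * c = 1 \<and> even c}"

definition w2 :: mat2 where
  "w2 = mk2 0 (- 1 / sqrt 2) (2 / sqrt 2) 0"

text \<open>The subgroup of GL_2(R) generated by Gamma_0(2) and w_2.
  Since -I lies in Gamma_0(2), working modulo sign changes nothing.\<close>
inductive_set Gamma0_2_plus :: "mat2 set" where
  gen_Gamma: "g \<in> Gamma0_2 \<Longrightarrow> g \<in> Gamma0_2_plus"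
| gen_w2: "w2 \<in> Gamma0_2_plus"
| mult: "g \<in> Gamma0_2_plus \<Longrightarrow> h \<in> Gamma0_2_plus \<Longrightarrow> g ** h \<in> Gamma0_2_plus"
| inv: "g \<in> Gamma0_2_plus \<Longrightarrow> matrix_inv g \<in> Gamma0_2_plus"

definition M1 :: "int \<Rightarrow> mat2 set" where
  "M1 m = {mk2 (of_int x) (of_int y) 0 (of_int z) | x y z :: int.
             x > 0 \<and> z > 0 \<and> x * z = m \<and> 0 \<le> y \<and> y < z \<and> gcd x (gcd y z) = 1 \<and> odd x}"

definition S1 :: "int \<Rightarrow> mat2 set" where
  "S1 m = {mk2 (of_int x) (of_int y) 0 (of_int z) | x y z :: int.
             x > 0 \<and> z > 0 \<and> x * z = m \<and> 0 \<le> y \<and> y < z \<and> gcd x (gcd y z) = 1 \<and> odd z}"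

definition S2 :: "int \<Rightarrow> mat2 set" where
  "S2 m = {mk2 (of_int x / sqrt 2) (of_int y / sqrt 2) 0 (of_int z / sqrt 2) | x y z :: int.
             x > 0 \<and> z > 0 \<and> x * z = 2 * m \<and> 0 \<le> y \<and> y < z \<and> gcd x (gcd y z) = 1
             \<and> even x \<and> even z}"

definition Mm :: "int \<Rightarrow> mat2 set" where
  "Mm m = M1 m \<union> S1 m \<union> S2 m"

definition right_coset :: "mat2 set \<Rightarrow> mat2 \<Rightarrow> mat2 set" where
  "right_coset G g = {h ** g | h. h \<in> G}"

end

theory Submission
  imports Defs "HOL-Computational_Algebra.Nth_Powers"
begin

(* Every element of \<Gamma>\<^sub>0(2)\<^sup>+ lies in \<Gamma>\<^sub>0(2) or in the coset \<Gamma>\<^sub>0(2) w\<^sub>2, and the elements of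
   that coset have nonzero lower-left entry. The elements of M^m are scaled upper triangular
   matrices with positive diagonal, scale 1 or 1/\<surd>2. So if \<gamma> = h \<delta> with h in \<Gamma>\<^sub>0(2)\<^sup>+,
   then h is an upper triangular element of \<Gamma>\<^sub>0(2) with positive diagonal, i.e. a translation
   [1 b; 0 1]. Comparing diagonals and using the irrationality of \<surd>2 shows that \<gamma> and \<delta> have the
   same scale and diagonal, and 0 \<le> y < z forces b = 0. *)

lemma mk2_nth [simp]:
  "mk2 a b c d $ 1 $ 1 = a" "mk2 a b c d $ 1 $ 2 = b" "mk2 a b c d $ 2 $ 1 = c" "mk2 a b c d $ 2 $ 2 = d"
  by (simp_all add: mk2_def)

lemma mk2_eq_iff: "mk2 a b c d = mk2 a' b' c' d' \<longleftrightarrow> a = a' \<and> b = b' \<and> c = c' \<and> d = d'"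
  by (auto simp: vec_eq_iff forall_2 mk2_def)

lemma mk2_mult:
  "mk2 a b c d ** mk2 a' b' c' d' = mk2 (a*a' + b*c') (a*b' + b*d') (c*a' + d*c') (c*b' + d*d')"
  by (simp add: mk2_def vec_eq_iff forall_2 sum_2 matrix_matrix_mult_def)

lemma mat_1_eq_mk2: "mat 1 = mk2 1 0 0 1"
  by (simp add: mk2_def vec_eq_iff forall_2 mat_def)

lemma matrix_inv_mk2:
  assumes "a*d - b*c = 1"
  shows "matrix_inv (mk2 a b c d) = mk2 d (-b) (-c) a"
proof -
  let ?A = "mk2 a b c d" and ?B = "mk2 d (-b) (-c) a"
  have inv: "?A ** ?B = mat 1 \<and> ?B ** ?A = mat 1"
    using assms by (simp add: mk2_mult mat_1_eq_mk2 mk2_eq_iff algebra_simps)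
  have unique: "B = ?B" if "?A ** B = mat 1 \<and> B ** ?A = mat 1" for B
  proof -
    have "B = (?B ** ?A) ** B" using inv by simp
    also have "\<dots> = ?B" using that by (simp add: matrix_mul_assoc[symmetric])
    finally show ?thesis .
  qed
  show ?thesis
    unfolding matrix_inv_def using inv unique by (intro some_equality) blast+
qed

lemma two_not_square_int: "(2::int) \<noteq> y ^ 2"
proof
  assume "2 = y ^ 2"
  moreover have "y ^ 2 \<le> 1 \<or> 4 \<le> y ^ 2"
  proof (cases "\<bar>y\<bar> \<le> 1")
    case True
    then have "\<bar>y\<bar> ^ 2 \<le> 1 ^ 2" by (intro power_mono) auto
    then show ?thesis by simp
  next
    case False
    then have "2 ^ 2 \<le> \<bar>y\<bar> ^ 2" by (intro power_mono) auto
    then show ?thesis by simp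
  qed
  ultimately show False by linarith
qed

lemma two_mult_square_not_square:
  fixes x y :: int
  assumes "x \<noteq> 0"
  shows "2 * x ^ 2 \<noteq> y ^ 2"
proof
  assume "2 * x ^ 2 = y ^ 2"
  then have "is_nth_power 2 (2 * x ^ 2)"
    by (intro is_nth_powerI)
  with assms have "is_nth_power 2 (2::int)"
    by (subst (asm) is_nth_power_mult_cancel_right) auto
  then show False
    using two_not_square_int by (auto elim: is_nth_powerE)
qed

lemma of_int_mult_sqrt_2_neq_of_int:
  fixes x y :: int
  assumes "x \<noteq> 0"
  shows "of_int x * sqrt 2 \<noteq> of_int y"
proof
  assume "of_int x * sqrt 2 = of_int y"
  then have "(of_int x * sqrt 2)\<^sup>2 = (of_int y :: real)\<^sup>2" by simp
  then have "of_int (2 * x\<^sup>2) = (of_int (y\<^sup>2) :: real)" by (simp add: power_mult_distrib)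
  with two_mult_square_not_square[OF assms] show False
    by (simp only: of_int_eq_iff)
qed

(* The coset \<Gamma>\<^sub>0(2) w\<^sub>2: an integer matrix [a b; 2c d] times w\<^sub>2 is [2b -a; 2d -2c] / \<surd>2. *)
definition Gamma0_2_w2 :: "mat2 set" where
  "Gamma0_2_w2 = {mk2 (sqrt 2 * of_int a) (of_int b / sqrt 2) (sqrt 2 * of_int c) (sqrt 2 * of_int d)
                   | a b c d :: int. 2*a*d - b*c = 1}"

lemma Gamma0_2I:
  "a*d - b*c = 1 \<Longrightarrow> even c \<Longrightarrow> g = mk2 (of_int a) (of_int b) (of_int c) (of_int d) \<Longrightarrow> g \<in> Gamma0_2"
  unfolding Gamma0_2_def by blast

lemma Gamma0_2E:
  assumes "g \<in> Gamma0_2"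
  obtains a b c d :: int
  where "g = mk2 (of_int a) (of_int b) (of_int c) (of_int d)" "a*d - b*c = 1" "even c"
  using assms unfolding Gamma0_2_def by blast

lemma Gamma0_2_w2I:
  "2*a*d - b*c = 1 \<Longrightarrow>
   g = mk2 (sqrt 2 * of_int a) (of_int b / sqrt 2) (sqrt 2 * of_int c) (sqrt 2 * of_int d) \<Longrightarrow>
   g \<in> Gamma0_2_w2"
  unfolding Gamma0_2_w2_def by blast

lemma Gamma0_2_w2E:
  assumes "g \<in> Gamma0_2_w2"
  obtains a b c d :: int
  where "g = mk2 (sqrt 2 * of_int a) (of_int b / sqrt 2) (sqrt 2 * of_int c) (sqrt 2 * of_int d)"
    "2*a*d - b*c = 1"
  using assms unfolding Gamma0_2_w2_def by blast

lemma w2_in_Gamma0_2_w2: "w2 \<in> Gamma0_2_w2"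
  by (rule Gamma0_2_w2I[of 0 0 "-1" 1]) (simp_all add: w2_def mk2_eq_iff field_simps)

lemma Gamma0_2_mult: "g \<in> Gamma0_2 \<Longrightarrow> h \<in> Gamma0_2 \<Longrightarrow> g ** h \<in> Gamma0_2"
proof (elim Gamma0_2E)
  fix a b c d a' b' c' d' :: int
  assume det: "a*d - b*c = 1" "a'*d' - b'*c' = 1" and "even c" "even c'"
    and g: "g = mk2 (of_int a) (of_int b) (of_int c) (of_int d)"
    and h: "h = mk2 (of_int a') (of_int b') (of_int c') (of_int d')"
  show "g ** h \<in> Gamma0_2"
    by (rule Gamma0_2I[of "a*a' + b*c'" "c*b' + d*d'" "a*b' + b*d'" "c*a' + d*c'"])
       ((use det in algebra), simp add: \<open>even c\<close> \<open>even c'\<close>, simp add: g h mk2_mult)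
qed

lemma Gamma0_2_mult_w2: "g \<in> Gamma0_2 \<Longrightarrow> h \<in> Gamma0_2_w2 \<Longrightarrow> g ** h \<in> Gamma0_2_w2"
proof (elim Gamma0_2E Gamma0_2_w2E evenE)
  fix a b c d a' b' c' d' k :: int
  assume det: "a*d - b*c = 1" "2*a'*d' - b'*c' = 1" and c: "c = 2*k"
    and g: "g = mk2 (of_int a) (of_int b) (of_int c) (of_int d)"
    and h: "h = mk2 (sqrt 2 * of_int a') (of_int b' / sqrt 2) (sqrt 2 * of_int c') (sqrt 2 * of_int d')"
  show "g ** h \<in> Gamma0_2_w2"
    by (rule Gamma0_2_w2I[of "a*a' + b*c'" "k*b' + d*d'" "a*b' + 2*b*d'" "c*a' + d*c'"])
       ((use det c in algebra), simp add: g h c mk2_mult mk2_eq_iff field_simps)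
qed

lemma w2_mult_Gamma0_2: "g \<in> Gamma0_2_w2 \<Longrightarrow> h \<in> Gamma0_2 \<Longrightarrow> g ** h \<in> Gamma0_2_w2"
proof (elim Gamma0_2E Gamma0_2_w2E evenE)
  fix a b c d a' b' c' d' k :: int
  assume det: "2*a*d - b*c = 1" "a'*d' - b'*c' = 1" and c': "c' = 2*k"
    and g: "g = mk2 (sqrt 2 * of_int a) (of_int b / sqrt 2) (sqrt 2 * of_int c) (sqrt 2 * of_int d)"
    and h: "h = mk2 (of_int a') (of_int b') (of_int c') (of_int d')"
  show "g ** h \<in> Gamma0_2_w2"
    by (rule Gamma0_2_w2I[of "a*a' + b*k" "c*b' + d*d'" "2*a*b' + b*d'" "c*a' + d*c'"])
       ((use det c' in algebra), simp add: g h c' mk2_mult mk2_eq_iff field_simps)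
qed

lemma w2_mult_w2: "g \<in> Gamma0_2_w2 \<Longrightarrow> h \<in> Gamma0_2_w2 \<Longrightarrow> g ** h \<in> Gamma0_2"
proof (elim Gamma0_2_w2E)
  fix a b c d a' b' c' d' :: int
  assume det: "2*a*d - b*c = 1" "2*a'*d' - b'*c' = 1"
    and g: "g = mk2 (sqrt 2 * of_int a) (of_int b / sqrt 2) (sqrt 2 * of_int c) (sqrt 2 * of_int d)"
    and h: "h = mk2 (sqrt 2 * of_int a') (of_int b' / sqrt 2) (sqrt 2 * of_int c') (sqrt 2 * of_int d')"
  show "g ** h \<in> Gamma0_2"
    by (rule Gamma0_2I[of "2*a*a' + b*c'" "c*b' + 2*d*d'" "a*b' + b*d'" "2*c*a' + 2*d*c'"])
       ((use det in algebra), simp, simp add: g h mk2_mult mk2_eq_iff field_simps)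
qed

lemma Gamma0_2_inv: "g \<in> Gamma0_2 \<Longrightarrow> matrix_inv g \<in> Gamma0_2"
proof (elim Gamma0_2E)
  fix a b c d :: int
  assume g: "g = mk2 (of_int a) (of_int b) (of_int c) (of_int d)" and det: "a*d - b*c = 1" "even c"
  have "of_int a * of_int d - of_int b * of_int c = (of_int (a*d - b*c) :: real)"
    by simp
  with det(1) have "matrix_inv g = mk2 (of_int d) (- of_int b) (- of_int c) (of_int a)"
    by (simp add: g matrix_inv_mk2)
  then show "matrix_inv g \<in> Gamma0_2"
    by (intro Gamma0_2I[of d a "-b" "-c"]) (use det in \<open>simp_all add: algebra_simps\<close>)
qed

lemma w2_inv: "g \<in> Gamma0_2_w2 \<Longrightarrow> matrix_inv g \<in> Gamma0_2_w2"
proof (elim Gamma0_2_w2E)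
  fix a b c d :: int
  assume g: "g = mk2 (sqrt 2 * of_int a) (of_int b / sqrt 2) (sqrt 2 * of_int c) (sqrt 2 * of_int d)"
    and det: "2*a*d - b*c = 1"
  have "(sqrt 2 * of_int a) * (sqrt 2 * of_int d) - (of_int b / sqrt 2) * (sqrt 2 * of_int c)
        = (of_int (2*a*d - b*c) :: real)"
    by simp
  with det have "matrix_inv g =
      mk2 (sqrt 2 * of_int d) (- (of_int b / sqrt 2)) (- (sqrt 2 * of_int c)) (sqrt 2 * of_int a)"
    by (simp add: g matrix_inv_mk2)
  then show "matrix_inv g \<in> Gamma0_2_w2"
    by (intro Gamma0_2_w2I[of d a "-b" "-c"]) (use det in \<open>simp_all add: algebra_simps\<close>)
qed

lemma Gamma0_2_plus_subset: "Gamma0_2_plus \<subseteq> Gamma0_2 \<union> Gamma0_2_w2"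
proof
  fix g assume "g \<in> Gamma0_2_plus"
  then show "g \<in> Gamma0_2 \<union> Gamma0_2_w2"
    by induction
      (auto simp: w2_in_Gamma0_2_w2 Gamma0_2_mult Gamma0_2_mult_w2 w2_mult_Gamma0_2 w2_mult_w2
        Gamma0_2_inv w2_inv)
qed

lemma mat_1_in_Gamma0_2_plus: "mat 1 \<in> Gamma0_2_plus"
  by (intro Gamma0_2_plus.gen_Gamma Gamma0_2I[of 1 1 0 0]) (simp_all add: mat_1_eq_mk2)

lemma mem_right_coset_self: "mat 1 \<in> G \<Longrightarrow> g \<in> right_coset G g"
  unfolding right_coset_def by (metis (mono_tags, lifting) matrix_mul_lid mem_Collect_eq)

lemma Gamma0_2_w2_lower_left_nonzero: "h \<in> Gamma0_2_w2 \<Longrightarrow> h $ 2 $ 1 \<noteq> 0"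
proof (elim Gamma0_2_w2E)
  fix a b c d :: int
  assume "h = mk2 (sqrt 2 * of_int a) (of_int b / sqrt 2) (sqrt 2 * of_int c) (sqrt 2 * of_int d)"
    and det: "2*a*d - b*c = 1"
  moreover have "c \<noteq> 0"
  proof
    assume "c = 0"
    with det have "2 * (a*d) = 1" by (simp add: mult.assoc)
    then show False by presburger
  qed
  ultimately show "h $ 2 $ 1 \<noteq> 0" by simp
qed

lemma Gamma0_2_upper_triangular:
  assumes "h \<in> Gamma0_2" "h $ 2 $ 1 = 0" "h $ 1 $ 1 > 0"
  obtains b :: int where "h = mk2 1 (of_int b) 0 1"
proof -
  from assms(1) obtain a b c d
    where h: "h = mk2 (of_int a) (of_int b) (of_int c) (of_int d)" and det: "a*d - b*c = 1"
    by (elim Gamma0_2E)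
  with assms(2,3) have "c = 0" "a > 0" by simp_all
  with det have "a = 1 \<and> d = 1"
    by (simp add: zmult_eq_1_iff)
  with h \<open>c = 0\<close> show thesis
    using that by simp
qed

lemma scale_eq_if_mult_of_int_eq:
  fixes x x' :: int
  assumes "s \<in> {1, 1 / sqrt 2}" "t \<in> {1, 1 / sqrt 2}" "x \<noteq> 0" "x' \<noteq> 0"
    and eq: "s * of_int x = t * of_int x'"
  shows "s = t"
proof (rule ccontr)
  assume "s \<noteq> t"
  with assms(1,2) consider "s = 1" "t = 1 / sqrt 2" | "s = 1 / sqrt 2" "t = 1"
    by auto
  then show False
  proof cases
    case 1
    with eq have "of_int x * sqrt 2 = of_int x'"
      by (simp add: field_simps)
    with of_int_mult_sqrt_2_neq_of_int \<open>x \<noteq> 0\<close> show False by blast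
  next
    case 2
    with eq have "of_int x' * sqrt 2 = of_int x"
      by (simp add: field_simps)
    with of_int_mult_sqrt_2_neq_of_int \<open>x' \<noteq> 0\<close> show False by blast
  qed
qed

definition scaled_triangular :: "mat2 set" where
  "scaled_triangular = {mk2 (s * of_int x) (s * of_int y) 0 (s * of_int z) | s x y z.
      s \<in> {1, 1 / sqrt 2} \<and> 0 < x \<and> 0 < z \<and> 0 \<le> y \<and> y < z}"

lemma scaled_triangularI:
  "s \<in> {1, 1 / sqrt 2} \<Longrightarrow> 0 < x \<Longrightarrow> 0 < z \<Longrightarrow> 0 \<le> y \<Longrightarrow> y < z \<Longrightarrow>
   mk2 (s * of_int x) (s * of_int y) 0 (s * of_int z) \<in> scaled_triangular"
  unfolding scaled_triangular_def by blast

lemma Mm_subset_scaled_triangular: "Mm m \<subseteq> scaled_triangular"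
proof -
  have "M1 m \<subseteq> scaled_triangular" "S1 m \<subseteq> scaled_triangular"
    unfolding M1_def S1_def by (auto intro!: scaled_triangularI[where s = 1, simplified])
  moreover have "S2 m \<subseteq> scaled_triangular"
    unfolding S2_def by (auto intro!: scaled_triangularI[where s = "1 / sqrt 2", simplified])
  ultimately show ?thesis
    unfolding Mm_def by blast
qed

lemma scaled_triangular_eq_if_mult:
  assumes "\<gamma> \<in> scaled_triangular" "\<delta> \<in> scaled_triangular"
    and "h \<in> Gamma0_2 \<union> Gamma0_2_w2" and "\<gamma> = h ** \<delta>"
  shows "\<gamma> = \<delta>"
proof -
  obtain s x y z where s: "s \<in> {1, 1 / sqrt 2}" and xyz: "0 < x" "0 < z" "0 \<le> y" "y < z"
    and \<gamma>: "\<gamma> = mk2 (s * of_int x) (s * of_int y) 0 (s * of_int z)"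
    using assms(1) unfolding scaled_triangular_def by blast
  obtain t x' y' z' where t: "t \<in> {1, 1 / sqrt 2}" and xyz': "0 < x'" "0 < z'" "0 \<le> y'" "y' < z'"
    and \<delta>: "\<delta> = mk2 (t * of_int x') (t * of_int y') 0 (t * of_int z')"
    using assms(2) unfolding scaled_triangular_def by blast
  have "t > 0" using t by auto
  have entries: "\<gamma> $ 2 $ 1 = h $ 2 $ 1 * (t * of_int x')" "\<gamma> $ 1 $ 1 = h $ 1 $ 1 * (t * of_int x')"
    by (simp_all add: assms(4) \<delta> matrix_matrix_mult_def sum_2)
  with \<gamma> \<open>t > 0\<close> xyz' have "h $ 2 $ 1 = 0" by simp
  with assms(3) have "h \<in> Gamma0_2"
    using Gamma0_2_w2_lower_left_nonzero by blast
  have "0 < s * of_int x"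
    using s xyz(1) by auto
  then have "0 < h $ 1 $ 1 * (t * of_int x')"
    using entries(2) \<gamma> by simp
  moreover have "0 < t * of_int x'"
    using \<open>t > 0\<close> xyz' by simp
  ultimately have "h $ 1 $ 1 > 0"
    using zero_less_mult_pos2 by blast
  with \<open>h \<in> Gamma0_2\<close> \<open>h $ 2 $ 1 = 0\<close> obtain b where "h = mk2 1 (of_int b) 0 1"
    by (elim Gamma0_2_upper_triangular)
  with assms(4) \<gamma> \<delta> have eqs: "s * of_int x = t * of_int x'" "s * of_int z = t * of_int z'"
      "s * of_int y = t * of_int y' + of_int b * (t * of_int z')"
    by (simp_all add: mk2_mult mk2_eq_iff)
  have "s = t"
    using scale_eq_if_mult_of_int_eq[OF s t _ _ eqs(1)] xyz xyz' by simp
  with eqs(1,2) \<open>t > 0\<close> have "x = x'" "z = z'"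
    by simp_all
  from eqs(3) \<open>s = t\<close> have "t * of_int y = t * of_int (y' + b * z')"
    by (simp add: algebra_simps)
  with \<open>t > 0\<close> have "(of_int y :: real) = of_int (y' + b * z')"
    by simp
  then have "y = y' + b * z'"
    by (simp only: of_int_eq_iff)
  have "y = y mod z'"
    using xyz \<open>z = z'\<close> by (simp add: mod_pos_pos_trivial)
  also have "\<dots> = (y' + b * z') mod z'"
    using \<open>y = y' + b * z'\<close> by simp
  also have "\<dots> = y'"
    using xyz' by (simp add: mod_pos_pos_trivial)
  finally have "y = y'" .
  with \<gamma> \<delta> \<open>s = t\<close> \<open>x = x'\<close> \<open>z = z'\<close> show "\<gamma> = \<delta>" by simp
qed

theorem lemma2p2:
  fixes m :: int
  assumes "m > 0" and "even m"
    and "\<gamma> \<in> Mm m" and "\<delta> \<in> Mm m" and "\<gamma> \<noteq> \<delta>"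
  shows "right_coset Gamma0_2_plus \<gamma> \<noteq> right_coset Gamma0_2_plus \<delta>"
proof
  assume "right_coset Gamma0_2_plus \<gamma> = right_coset Gamma0_2_plus \<delta>"
  then have "\<gamma> \<in> right_coset Gamma0_2_plus \<delta>"
    using mem_right_coset_self[OF mat_1_in_Gamma0_2_plus] by blast
  then obtain h where "h \<in> Gamma0_2_plus" and \<gamma>: "\<gamma> = h ** \<delta>"
    unfolding right_coset_def by blast
  then have "h \<in> Gamma0_2 \<union> Gamma0_2_w2"
    using Gamma0_2_plus_subset by blast
  moreover have "\<gamma> \<in> scaled_triangular" "\<delta> \<in> scaled_triangular"
    using assms(3,4) Mm_subset_scaled_triangular by blast+
  ultimately have "\<gamma> = \<delta>"
    using scaled_triangular_eq_if_mult \<gamma> by blast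
  with assms(5) show False ..
qed

end
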